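(* Let $S$ be a right ample semigroup embedded as a unary semigroup into an inverse semigroup $Q$ (so $a^*=a^{-1}a$ for all $a\in S$). Then for all $a,b,c,x\in S$: (i) $a\leq_{\mathcal{L}^Q}b$ if and only if $a^*=a^*b^*$, if and only if $a\leq_{\mathcal{L}^*}b$; (ii) $L_a\wedge L_b=L_c$ if and only if $c^*=a^*b^*$; (iii) $L_a\wedge L_b=L_{xa}$ if and only if $ab^*=x^*a$. Here $L_a$ denotes the $\mathcal{L}$-class of $a$ in $Q$ and $\wedge$ the meet in the semilattice $Q/\mathcal{L}$.
   Context: $a^{-1}$ is the unique inverse in $Q$; $a\leq_{\mathcal{L}^Q}b$ iff $Q^1a\subseteq Q^1b$, and $Q/\mathcal{L}$ is ordered accordingly (it is a meet semilattice). On $S$: $a\leq_{\mathcal{L}^*}b$ iff for all $x,y\in S^1$, $bx=by$ implies $ax=ay$; $a\,\mathcal{L}^*\,b$ iff $a\leq_{\mathcal{L}^*}b$ and $b\leq_{\mathcal{L}^*}a$. $S$ is right adequate if its idempotents commute and every $a$ is $\mathcal{L}^*$-related to a (unique) idempotent $a^*$; right ample if moreover $b^*a=a(ba)^*$ for all $a,b\in S$. *)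

theory Defs
  imports Main
begin

(* The inverse semigroup Q is the whole (multiplicative) type 'q. *)
definition inverse_semigroup :: "'q::semigroup_mult itself \<Rightarrow> bool" where
  "inverse_semigroup _ \<longleftrightarrow> (\<forall>a::'q. \<exists>!b. a * b * a = a \<and> b * a * b = b)"

definition qinv :: "'q::semigroup_mult \<Rightarrow> 'q" where
  "qinv a = (THE b. a * b * a = a \<and> b * a * b = b)"

definition Q1mult :: "'q::semigroup_mult \<Rightarrow> 'q set" where
  "Q1mult a = insert a (range (\<lambda>q. q * a))"

definition leqLQ :: "'q::semigroup_mult \<Rightarrow> 'q \<Rightarrow> bool" where
  "leqLQ a b \<longleftrightarrow> Q1mult a \<subseteq> Q1mult b"

definition Lclass :: "'q::semigroup_mult \<Rightarrow> 'q set" where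
  "Lclass a = {y. Q1mult y = Q1mult a}"

definition Lclass_le :: "'q::semigroup_mult set \<Rightarrow> 'q set \<Rightarrow> bool" where
  "Lclass_le A B \<longleftrightarrow> (\<exists>a b. A = Lclass a \<and> B = Lclass b \<and> leqLQ a b)"

definition Lmeet_is :: "'q::semigroup_mult set \<Rightarrow> 'q set \<Rightarrow> 'q set \<Rightarrow> bool" where
  "Lmeet_is A B M \<longleftrightarrow> M \<in> range Lclass \<and> Lclass_le M A \<and> Lclass_le M B \<and>
     (\<forall>D \<in> range Lclass. Lclass_le D A \<and> Lclass_le D B \<longrightarrow> Lclass_le D M)"

(* Subsemigroup S; S^1 represented by options, None = adjoined identity *)
definition subsemigroup :: "'q::semigroup_mult set \<Rightarrow> bool" where
  "subsemigroup S \<longleftrightarrow> (\<forall>a\<in>S. \<forall>b\<in>S. a * b \<in> S)"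

definition S1 :: "'q set \<Rightarrow> 'q option set" where
  "S1 S = insert None (Some ` S)"

fun rmul1 :: "'q::semigroup_mult \<Rightarrow> 'q option \<Rightarrow> 'q" where
  "rmul1 a None = a"
| "rmul1 a (Some x) = a * x"

definition leqLstar :: "'q::semigroup_mult set \<Rightarrow> 'q \<Rightarrow> 'q \<Rightarrow> bool" where
  "leqLstar S a b \<longleftrightarrow> (\<forall>x\<in>S1 S. \<forall>y\<in>S1 S. rmul1 b x = rmul1 b y \<longrightarrow> rmul1 a x = rmul1 a y)"

definition Lstar :: "'q::semigroup_mult set \<Rightarrow> 'q \<Rightarrow> 'q \<Rightarrow> bool" where
  "Lstar S a b \<longleftrightarrow> leqLstar S a b \<and> leqLstar S b a"

definition idems :: "'q::semigroup_mult set \<Rightarrow> 'q set" where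
  "idems S = {e\<in>S. e * e = e}"

definition right_adequate :: "'q::semigroup_mult set \<Rightarrow> bool" where
  "right_adequate S \<longleftrightarrow> (\<forall>e\<in>idems S. \<forall>f\<in>idems S. e * f = f * e) \<and>
     (\<forall>a\<in>S. \<exists>!e. e \<in> idems S \<and> Lstar S a e)"

definition rstar :: "'q::semigroup_mult set \<Rightarrow> 'q \<Rightarrow> 'q" where
  "rstar S a = (THE e. e \<in> idems S \<and> Lstar S a e)"

definition right_ample :: "'q::semigroup_mult set \<Rightarrow> bool" where
  "right_ample S \<longleftrightarrow> right_adequate S \<and>
     (\<forall>a\<in>S. \<forall>b\<in>S. rstar S b * a = a * rstar S (b * a))"

end

theory Submission
  imports Defs
begin

text \<open>
  Everything reduces to the idempotents \<open>a\<^sup>-\<^sup>1a\<close> of \<open>Q\<close>, which commute. One has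
  \<open>a \<le>\<^sub>L b\<close> in \<open>Q\<close> iff \<open>a = a b\<^sup>-\<^sup>1b\<close> iff \<open>a\<^sup>-\<^sup>1a \<le> b\<^sup>-\<^sup>1b\<close> in the natural order of idempotents,
  so \<open>Q/L\<close> is isomorphic to the semilattice of idempotents and the meet of \<open>L\<^sub>a\<close> and \<open>L\<^sub>b\<close>
  is the class of any \<open>c\<close> with \<open>c\<^sup>-\<^sup>1c = a\<^sup>-\<^sup>1a b\<^sup>-\<^sup>1b\<close>. Since \<open>b\<^sup>* = b\<^sup>-\<^sup>1b\<close> lies in \<open>S\<close>, the
  equation \<open>b b\<^sup>* = b\<close> can be tested by the \<open>L\<^sup>*\<close>-preorder, which gives the second part of (i).
  For (iii), ampleness gives \<open>x\<^sup>*a = a (xa)\<^sup>*\<close>, so \<open>a b\<^sup>* = x\<^sup>*a\<close> is equivalent, after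
  multiplying by \<open>a\<^sup>-\<^sup>1\<close> on the left, to \<open>(xa)\<^sup>* = a\<^sup>* b\<^sup>*\<close>.
\<close>

lemma qinv_inverse:
  fixes a :: "'q::semigroup_mult"
  assumes "inverse_semigroup TYPE('q)"
  shows "a * qinv a * a = a" and "qinv a * a * qinv a = qinv a"
proof -
  have "\<exists>!b. a * b * a = a \<and> b * a * b = b"
    using assms unfolding inverse_semigroup_def by blast
  then have "a * qinv a * a = a \<and> qinv a * a * qinv a = qinv a"
    unfolding qinv_def by (rule theI')
  then show "a * qinv a * a = a" and "qinv a * a * qinv a = qinv a" by auto
qed

lemma qinv_unique:
  fixes a b :: "'q::semigroup_mult"
  assumes "inverse_semigroup TYPE('q)" and "a * b * a = a" and "b * a * b = b"
  shows "b = qinv a"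
proof -
  have "\<exists>!b. a * b * a = a \<and> b * a * b = b"
    using assms(1) unfolding inverse_semigroup_def by blast
  then show ?thesis
    unfolding qinv_def using assms(2,3) by (metis (mono_tags, lifting) the_equality)
qed

lemma qinv_idem:
  fixes e :: "'q::semigroup_mult"
  assumes "inverse_semigroup TYPE('q)" and "e * e = e"
  shows "qinv e = e"
  using qinv_unique[OF assms(1), of e e] assms(2) by simp

lemma mult_qinv_self:
  fixes a :: "'q::semigroup_mult"
  assumes "inverse_semigroup TYPE('q)"
  shows "a * (qinv a * a) = a"
  using qinv_inverse[OF assms] by (metis mult.assoc)

lemma qinv_mult_self_idem:
  fixes a :: "'q::semigroup_mult"
  assumes "inverse_semigroup TYPE('q)"
  shows "(qinv a * a) * (qinv a * a) = qinv a * a"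
  using qinv_inverse[OF assms] by (metis mult.assoc)

lemma idem_mult_idem:
  fixes e f :: "'q::semigroup_mult"
  assumes I: "inverse_semigroup TYPE('q)" and e: "e * e = e" and f: "f * f = f"
  shows "(e * f) * (e * f) = e * f"
proof -
  define y where "y = qinv (e * f)"
  have y1: "e * f * y * (e * f) = e * f" and y2: "y * (e * f) * y = y"
    using qinv_inverse[OF I, of "e * f"] unfolding y_def by auto
  have "e * f * (f * y * e) * (e * f) = e * f" and "f * y * e * (e * f) * (f * y * e) = f * y * e"
    by (metis y1 e f mult.assoc) (metis y2 e f mult.assoc)
  then have "f * y * e = y"
    using qinv_unique[OF I] y_def by blast
  then have y_idem: "y * y = y"
    by (metis y2 mult.assoc)
  have "e * f = qinv y"
    using qinv_unique[OF I, of y "e * f"] y1 y2 by (simp add: mult.assoc)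
  then have "e * f = y"
    using qinv_idem[OF I y_idem] by simp
  then show ?thesis using y_idem by simp
qed

lemma idem_mult_commute:
  fixes e f :: "'q::semigroup_mult"
  assumes I: "inverse_semigroup TYPE('q)" and e: "e * e = e" and f: "f * f = f"
  shows "e * f = f * e"
proof -
  have ef: "(e * f) * (e * f) = e * f" and fe: "(f * e) * (f * e) = f * e"
    using idem_mult_idem[OF I e f] idem_mult_idem[OF I f e] .
  have "e * f * (f * e) * (e * f) = e * f" and "f * e * (e * f) * (f * e) = f * e"
    by (metis ef f e mult.assoc) (metis fe f e mult.assoc)
  then have "f * e = qinv (e * f)"
    using qinv_unique[OF I] by blast
  also have "\<dots> = e * f"
    using qinv_idem[OF I ef] .
  finally show ?thesis by simp
qed

lemma leqLQ_iff:
  fixes a b :: "'q::semigroup_mult"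
  assumes I: "inverse_semigroup TYPE('q)"
  shows "leqLQ a b \<longleftrightarrow> qinv a * a = qinv a * a * (qinv b * b)"
proof
  assume "leqLQ a b"
  then have "a = b \<or> (\<exists>q. a = q * b)"
    unfolding leqLQ_def Q1mult_def by blast
  then show "qinv a * a = qinv a * a * (qinv b * b)"
  proof
    assume "a = b"
    then show ?thesis using qinv_mult_self_idem[OF I, of a] by simp
  next
    assume "\<exists>q. a = q * b"
    then obtain q where "a = q * b" ..
    then show ?thesis using mult_qinv_self[OF I, of b] by (simp add: mult.assoc)
  qed
next
  assume "qinv a * a = qinv a * a * (qinv b * b)"
  then have ab: "a = (a * qinv b) * b"
    by (metis mult_qinv_self[OF I, of a] mult.assoc)
  have "z * a = (z * (a * qinv b)) * b" for z
    by (subst ab) (simp add: mult.assoc)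
  then show "leqLQ a b"
    unfolding leqLQ_def Q1mult_def using ab by blast
qed

lemma leqLQ_mult_left: "leqLQ (x * a) a"
  unfolding leqLQ_def Q1mult_def by (auto simp: image_iff) (metis mult.assoc)

lemma leqLstar_iff:
  fixes a b :: "'q::semigroup_mult"
  assumes I: "inverse_semigroup TYPE('q)" and "qinv b * b \<in> S"
  shows "leqLstar S a b \<longleftrightarrow> qinv a * a = qinv a * a * (qinv b * b)"
proof
  assume "leqLstar S a b"
  moreover have "Some (qinv b * b) \<in> S1 S" and "None \<in> S1 S"
    using assms(2) unfolding S1_def by auto
  moreover have "rmul1 b (Some (qinv b * b)) = rmul1 b None"
    using mult_qinv_self[OF I, of b] by simp
  ultimately have "a * (qinv b * b) = a"
    unfolding leqLstar_def by fastforce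
  then show "qinv a * a = qinv a * a * (qinv b * b)"
    by (metis mult.assoc)
next
  assume "qinv a * a = qinv a * a * (qinv b * b)"
  then have ab: "a = (a * qinv b) * b"
    by (metis mult_qinv_self[OF I, of a] mult.assoc)
  have "rmul1 a z = (a * qinv b) * rmul1 b z" for z
    using ab by (cases z) (simp_all add: mult.assoc[symmetric])
  then show "leqLstar S a b"
    unfolding leqLstar_def by metis
qed

lemma Lclass_le_Lclass_iff: "Lclass_le (Lclass a) (Lclass b) \<longleftrightarrow> leqLQ a b"
proof -
  have "Lclass a = Lclass b \<longleftrightarrow> Q1mult a = Q1mult b" for a b
    unfolding Lclass_def by auto
  then show ?thesis
    unfolding Lclass_le_def leqLQ_def by metis
qed

lemma Lmeet_is_Lclass_iff:
  fixes a b c :: "'q::semigroup_mult"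
  assumes I: "inverse_semigroup TYPE('q)"
  shows "Lmeet_is (Lclass a) (Lclass b) (Lclass c) \<longleftrightarrow>
         qinv c * c = (qinv a * a) * (qinv b * b)"
proof -
  define E :: "'q \<Rightarrow> 'q" where "E y = qinv y * y" for y
  have E_idem: "E y * E y = E y" for y
    unfolding E_def using qinv_mult_self_idem[OF I] .
  have le_iff: "Lclass_le (Lclass y) (Lclass z) \<longleftrightarrow> E y = E y * E z" for y z
    unfolding Lclass_le_Lclass_iff leqLQ_iff[OF I] E_def ..
  define e where "e = E a * E b"
  have e_idem: "e * e = e"
    unfolding e_def using idem_mult_idem[OF I E_idem E_idem] .
  have "E e = e"
    unfolding E_def using qinv_idem[OF I e_idem] e_idem by simp
  have e_below: "e = e * E a" "e = e * E b"
    unfolding e_def by (metis idem_mult_commute[OF I E_idem E_idem] E_idem mult.assoc)+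
  show ?thesis
  proof
    assume M: "Lmeet_is (Lclass a) (Lclass b) (Lclass c)"
    then have "E c = E c * E a" "E c = E c * E b"
      unfolding Lmeet_is_def le_iff by auto
    then have "E c = E c * e"
      unfolding e_def by (metis mult.assoc)
    moreover have "e = e * E c"
    proof -
      have "Lclass_le (Lclass e) (Lclass a)" and "Lclass_le (Lclass e) (Lclass b)"
        unfolding le_iff \<open>E e = e\<close> using e_below .
      then have "Lclass_le (Lclass e) (Lclass c)"
        using M unfolding Lmeet_is_def by blast
      then show ?thesis
        unfolding le_iff \<open>E e = e\<close> .
    qed
    ultimately have "E c = e"
      using idem_mult_commute[OF I E_idem e_idem] by metis
    then show "qinv c * c = (qinv a * a) * (qinv b * b)"
      unfolding E_def e_def .
  next
    assume "qinv c * c = (qinv a * a) * (qinv b * b)"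
    then have "E c = e"
      unfolding E_def e_def .
    then have "Lclass_le (Lclass c) (Lclass a)" and "Lclass_le (Lclass c) (Lclass b)"
      unfolding le_iff using e_below by simp_all
    moreover have "Lclass_le (Lclass d) (Lclass c)"
      if "Lclass_le (Lclass d) (Lclass a)" and "Lclass_le (Lclass d) (Lclass b)" for d
      using that \<open>E c = e\<close> unfolding le_iff e_def by (metis mult.assoc)
    ultimately show "Lmeet_is (Lclass a) (Lclass b) (Lclass c)"
      unfolding Lmeet_is_def by blast
  qed
qed

lemma Lmeet_is_Lclass_mult_iff:
  fixes a b x :: "'q::semigroup_mult"
  assumes I: "inverse_semigroup TYPE('q)"
    and ample: "qinv x * x * a = a * (qinv (x * a) * (x * a))"
  shows "Lmeet_is (Lclass a) (Lclass b) (Lclass (x * a)) \<longleftrightarrow>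
         a * (qinv b * b) = qinv x * x * a"
proof -
  define E :: "'q \<Rightarrow> 'q" where "E y = qinv y * y" for y
  have E_idem: "E y * E y = E y" for y
    unfolding E_def using qinv_mult_self_idem[OF I] .
  have aE: "a * E a = a"
    unfolding E_def using mult_qinv_self[OF I] .
  have ample': "E x * a = a * E (x * a)"
    unfolding E_def using ample .
  have "E (x * a) = E a * E b \<longleftrightarrow> a * E b = E x * a"
  proof
    assume "E (x * a) = E a * E b"
    then show "a * E b = E x * a"
      using aE ample' by (metis mult.assoc)
  next
    assume hyp: "a * E b = E x * a"
    have "E (x * a) = E (x * a) * E a"
      using leqLQ_mult_left[of x a] leqLQ_iff[OF I] unfolding E_def by blast
    have "E a * E b = qinv a * (a * E b)"
      unfolding E_def by (simp add: mult.assoc)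
    also have "\<dots> = E a * E (x * a)"
      unfolding hyp ample' unfolding E_def by (simp add: mult.assoc)
    also have "\<dots> = E (x * a)"
      using \<open>E (x * a) = E (x * a) * E a\<close> idem_mult_commute[OF I E_idem E_idem] by metis
    finally show "E (x * a) = E a * E b" ..
  qed
  then show ?thesis
    unfolding Lmeet_is_Lclass_iff[OF I] E_def .
qed

lemma rstar_in:
  assumes "right_adequate S" and "a \<in> S"
  shows "rstar S a \<in> S"
proof -
  have "\<exists>!e. e \<in> idems S \<and> Lstar S a e"
    using assms unfolding right_adequate_def by blast
  then have "rstar S a \<in> idems S \<and> Lstar S a (rstar S a)"
    unfolding rstar_def by (rule theI')
  then show ?thesis unfolding idems_def by blast
qed

theorem lemma4p7:
  fixes S :: "'q::semigroup_mult set"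
  assumes "inverse_semigroup TYPE('q)"
    and "subsemigroup S"
    and "right_ample S"
    and "\<forall>a\<in>S. rstar S a = qinv a * a"
    and "a \<in> S" and "b \<in> S" and "c \<in> S" and "x \<in> S"
  shows "(leqLQ a b \<longleftrightarrow> rstar S a = rstar S a * rstar S b)
       \<and> (rstar S a = rstar S a * rstar S b \<longleftrightarrow> leqLstar S a b)
       \<and> (Lmeet_is (Lclass a) (Lclass b) (Lclass c) \<longleftrightarrow> rstar S c = rstar S a * rstar S b)
       \<and> (Lmeet_is (Lclass a) (Lclass b) (Lclass (x * a)) \<longleftrightarrow> a * rstar S b = rstar S x * a)"
proof -
  note I = assms(1)
  have "x * a \<in> S"
    using assms(2,5,8) unfolding subsemigroup_def by blast
  then have a: "rstar S a = qinv a * a" and b: "rstar S b = qinv b * b"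
    and c: "rstar S c = qinv c * c" and x: "rstar S x = qinv x * x"
    and xa: "rstar S (x * a) = qinv (x * a) * (x * a)"
    using assms(4-8) by auto
  have "qinv b * b \<in> S"
    using assms(3,6) rstar_in b unfolding right_ample_def by metis
  moreover have "qinv x * x * a = a * (qinv (x * a) * (x * a))"
    using assms(3,5,8) x xa unfolding right_ample_def by metis
  ultimately show ?thesis
    unfolding a b c x
    using leqLQ_iff[OF I, of a b] leqLstar_iff[OF I, of b S a] Lmeet_is_Lclass_iff[OF I, of a b c]
      Lmeet_is_Lclass_mult_iff[OF I, of x a b]
    by blast
qed

end
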